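(* Let $A$ be a non-trivial (i.e. $A\neq\{0\}$) commutative Banach algebra, let $a\in A$, $c\in\mathbb C$, and let $M=cI+M_a$, where $M_a\in L(A)$ is the multiplication operator $M_ab=ab$. Then the operator $M\oplus M$ on $A\oplus A$ is not cyclic.
   Context: A Banach algebra is a complex algebra, possibly without unit, with a complete submultiplicative norm. An operator $T\in L(X)$ on a topological vector space $X$ is cyclic if there is $x\in X$ such that the linear span of $\{T^nx:n\ge 0\}$ is dense in $X$. *)

theory Defs
  imports "HOL-Analysis.Analysis"
begin

text \<open>Together with the type class banach, real_normed_algebra (complete submultiplicative
  norm, possibly without unit) this is a complex Banach algebra.\<close>
definition complex_scale :: "(complex \<Rightarrow> 'a::real_normed_algebra \<Rightarrow> 'a) \<Rightarrow> bool" where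
  "complex_scale sc \<longleftrightarrow>
     (\<forall>x. sc 1 x = x) \<and>
     (\<forall>c d x. sc c (sc d x) = sc (c * d) x) \<and>
     (\<forall>c d x. sc (c + d) x = sc c x + sc d x) \<and>
     (\<forall>c x y. sc c (x + y) = sc c x + sc c y) \<and>
     (\<forall>r x. sc (complex_of_real r) x = scaleR r x) \<and>
     (\<forall>c x. norm (sc c x) = cmod c * norm x) \<and>
     (\<forall>c x y. sc c (x * y) = sc c x * y \<and> sc c (x * y) = x * sc c y)"

definition cyclic_op :: "(complex \<Rightarrow> 'b::{topological_space, comm_monoid_add} \<Rightarrow> 'b) \<Rightarrow> ('b \<Rightarrow> 'b) \<Rightarrow> bool"
  where "cyclic_op sc T \<longleftrightarrow>
    (\<exists>x.
       closure {\<Sum>i<N. sc (p i) ((T ^^ i) x) | N p. True} = UNIV)"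

end

theory Submission
  imports Defs
begin

text \<open>If (x, y) were a cyclic vector of M \<oplus> M, every closed set containing an M \<oplus> M-invariant
  subspace through (x, y) would be all of A \<oplus> A, and by commutativity there are many such. The set
  {(u, v). u y = v x} is one; its density forces A x = A y = 0. Then M acts on x and y as
  the scalar c, so the complex line through (x, y) is invariant; it lies in the closed set
  {(u, v). \<parallel>u\<parallel> \<parallel>y\<parallel> = \<parallel>v\<parallel> \<parallel>x\<parallel>}, whose density forces x = y = 0, and the line degenerates
  to {0}, which is not dense in the non-trivial space A \<oplus> A.\<close>

definition orbit_span :: "(complex \<Rightarrow> 'b::comm_monoid_add \<Rightarrow> 'b) \<Rightarrow> ('b \<Rightarrow> 'b) \<Rightarrow> 'b \<Rightarrow> 'b set"
  where "orbit_span sc T v = {\<Sum>i<N. sc (p i) ((T ^^ i) v) | N p. True}"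

definition invariant_subspace ::
    "(complex \<Rightarrow> 'b::comm_monoid_add \<Rightarrow> 'b) \<Rightarrow> ('b \<Rightarrow> 'b) \<Rightarrow> 'b set \<Rightarrow> bool"
  where "invariant_subspace sc T S \<longleftrightarrow>
    0 \<in> S \<and> (\<forall>p\<in>S. \<forall>q\<in>S. p + q \<in> S) \<and> (\<forall>d. \<forall>q\<in>S. sc d q \<in> S) \<and> (\<forall>q\<in>S. T q \<in> S)"

lemma cyclic_op_iff_dense_orbit_span:
  "cyclic_op sc T \<longleftrightarrow> (\<exists>v. closure (orbit_span sc T v) = UNIV)"
  unfolding cyclic_op_def orbit_span_def ..

lemma orbit_span_subset_invariant_subspace:
  assumes S: "invariant_subspace sc T S" and "v \<in> S"
  shows "orbit_span sc T v \<subseteq> S"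
proof -
  have orbit: "(T ^^ i) v \<in> S" for i
    using S \<open>v \<in> S\<close> by (induction i) (auto simp: invariant_subspace_def)
  have "(\<Sum>i<N. sc (p i) ((T ^^ i) v)) \<in> S" for N p
    using S orbit by (induction N) (auto simp: invariant_subspace_def)
  then show ?thesis
    unfolding orbit_span_def by blast
qed

lemma dense_orbit_span_closed_superset_eq_UNIV:
  assumes "closure (orbit_span sc T v) = UNIV"
    and "invariant_subspace sc T S" and "v \<in> S"
    and "S \<subseteq> C" and "closed C"
  shows "C = UNIV"
  using closure_minimal[OF order.trans[OF orbit_span_subset_invariant_subspace] \<open>closed C\<close>] assms
  by blast

lemma complex_scale_zero_right:
  assumes "complex_scale sc"
  shows "sc d 0 = 0"
proof -
  have "norm (sc d 0) = cmod d * norm (0::'a)"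
    using assms unfolding complex_scale_def by blast
  then show ?thesis by simp
qed

lemma invariant_subspace_cross_relation:
  fixes sc :: "complex \<Rightarrow> 'a::{real_normed_algebra, comm_ring} \<Rightarrow> 'a"
  assumes sc: "complex_scale sc"
  shows "invariant_subspace (\<lambda>d (u, v). (sc d u, sc d v))
           (\<lambda>(u, v). (sc c u + a * u, sc c v + a * v)) {q. fst q * y = snd q * x}"
proof -
  have ml: "\<And>c u v. sc c (u * v) = sc c u * v"
    using sc unfolding complex_scale_def by blast
  have scale: "sc d u * y = sc d v * x" if "u * y = v * x" for d u v
    by (metis ml that)
  have mult: "(a * u) * y = (a * v) * x" if "u * y = v * x" for u v
    by (metis mult.assoc that)
  show ?thesis
    unfolding invariant_subspace_def
    by (auto simp: distrib_right scale mult)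
qed

lemma invariant_subspace_complex_line:
  fixes sc :: "complex \<Rightarrow> 'a::{real_normed_algebra, comm_ring} \<Rightarrow> 'a"
  assumes sc: "complex_scale sc" and "a * x = 0" and "a * y = 0"
  shows "invariant_subspace (\<lambda>d (u, v). (sc d u, sc d v))
           (\<lambda>(u, v). (sc c u + a * u, sc c v + a * v)) {(sc \<alpha> x, sc \<alpha> y) | \<alpha>. True}"
proof -
  have mul: "\<And>c d u. sc c (sc d u) = sc (c * d) u"
    and addl: "\<And>c d u. sc (c + d) u = sc c u + sc d u"
    and mr: "\<And>c u v. sc c (u * v) = u * sc c v"
    using sc unfolding complex_scale_def by blast+
  have "sc 0 u = 0" for u
    using addl[of 0 0 u] by simp
  then have zero: "(0::'a \<times> 'a) \<in> {(sc \<alpha> x, sc \<alpha> y) | \<alpha>. True}"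
    by (auto simp: zero_prod_def intro!: exI[of _ 0])
  have annihilated: "a * sc \<alpha> x = 0" "a * sc \<alpha> y = 0" for \<alpha>
    using assms(2,3) mr complex_scale_zero_right[OF sc] by metis+
  show ?thesis
    unfolding invariant_subspace_def using zero
    by (auto simp: mul annihilated addl[symmetric])
qed

theorem proposition1p4:
  fixes sc :: "complex \<Rightarrow> 'a::{banach, real_normed_algebra, comm_ring} \<Rightarrow> 'a"
    and a :: 'a and c :: complex
  assumes "complex_scale sc"
    and "\<exists>x::'a. x \<noteq> 0"
  shows "\<not> cyclic_op (\<lambda>d (x, y). (sc d x, sc d y))
                      (\<lambda>(x, y). (sc c x + a * x, sc c y + a * y))"
proof
  let ?S = "\<lambda>d (x, y). (sc d x, sc d y)"
  let ?T = "\<lambda>(x, y). (sc c x + a * x, sc c y + a * y)"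
  assume "cyclic_op ?S ?T"
  then obtain x y where dense: "closure (orbit_span ?S ?T (x, y)) = UNIV"
    unfolding cyclic_op_iff_dense_orbit_span by auto
  obtain z :: 'a where "z \<noteq> 0"
    using assms(2) by blast
  have closed_cross: "closed {q::'a \<times> 'a. fst q * y = snd q * x}"
    by (intro closed_Collect_eq continuous_intros)
  have "{q::'a \<times> 'a. fst q * y = snd q * x} = UNIV"
    by (rule dense_orbit_span_closed_superset_eq_UNIV[OF dense
          invariant_subspace_cross_relation[OF assms(1)] _ _ closed_cross]) (auto simp: mult.commute)
  then have "(0, a) \<in> {q::'a \<times> 'a. fst q * y = snd q * x}"
    and "(a, 0) \<in> {q::'a \<times> 'a. fst q * y = snd q * x}"
    by simp_all
  then have "a * x = 0" "a * y = 0"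
    by simp_all
  note line = invariant_subspace_complex_line[OF assms(1) this]
  have one: "sc 1 u = u" and norm_scale: "norm (sc d u) = cmod d * norm u" for d u
    using assms(1) unfolding complex_scale_def by blast+
  have closed_norms: "closed {q::'a \<times> 'a. norm (fst q) * norm y = norm (snd q) * norm x}"
    by (intro closed_Collect_eq continuous_intros)
  have "{q::'a \<times> 'a. norm (fst q) * norm y = norm (snd q) * norm x} = UNIV"
    by (rule dense_orbit_span_closed_superset_eq_UNIV[OF dense line _ _ closed_norms])
      (auto simp: one norm_scale intro: exI[of _ 1])
  then have "(0, z) \<in> {q::'a \<times> 'a. norm (fst q) * norm y = norm (snd q) * norm x}"
    and "(z, 0) \<in> {q::'a \<times> 'a. norm (fst q) * norm y = norm (snd q) * norm x}"
    by simp_all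
  then have "x = 0" "y = 0"
    using \<open>z \<noteq> 0\<close> by simp_all
  then have "{0::'a \<times> 'a} = UNIV"
    by (intro dense_orbit_span_closed_superset_eq_UNIV[OF dense line])
      (auto simp: complex_scale_zero_right[OF assms(1)] zero_prod_def)
  then have "(z, 0) \<in> {0::'a \<times> 'a}"
    by simp
  with \<open>z \<noteq> 0\<close> show False
    by (simp add: zero_prod_def)
qed

end
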